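(* Let $a>0$. Every triangle in the hyperbolic plane $\mathbb{H}^2$ (of curvature $-1$) having a side of length $a$ has area at most $\min\{a,\pi\}$.
   Context: $\mathbb{H}^2$ is the hyperbolic plane of Gaussian curvature $-1$; lengths and areas are hyperbolic. *)

theory Defs
  imports "HOL-Analysis.Analysis"
begin

text \<open>The hyperbolic plane of curvature -1, realised by the Beltrami-Klein model:
  points are the complex numbers (viewed as R^2) of norm less than 1; geodesics
  are Euclidean chords, so a geodesic triangle with vertices A, B, C is the
  Euclidean convex hull of the three points.\<close>

definition hdisk :: "complex set" where
  "hdisk = {z. norm z < 1}"

definition kdist :: "complex \<Rightarrow> complex \<Rightarrow> real" where
  "kdist p q = arcosh ((1 - p \<bullet> q) / sqrt ((1 - (norm p)^2) * (1 - (norm q)^2)))"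

definition harea :: "complex set \<Rightarrow> real" where
  "harea S = integral S (\<lambda>z. 1 / (1 - (norm z)^2) powr (3/2))"

definition htriangle :: "complex \<Rightarrow> complex \<Rightarrow> complex \<Rightarrow> complex set" where
  "htriangle A B C = convex hull {A, B, C}"

end

theory Submission
  imports Defs
begin

(* Parametrise the triangle by the chords from C to the points P(s) = A + s (B - A) of the side AB.
   The map (s, r) \<mapsto> C + r (P(s) - C) has Jacobian r |\<delta>|, \<delta> = wedge (A - C) (B - A), and the
   Klein area density can be integrated along each chord in closed form, which bounds the area by
   the integral over s of a function |\<delta>| F(s).  Pointwise, |\<delta>| F(s) is at most the Klein length
   element of AB at P(s), whose integral is the length a of AB, and at most the derivative of
   arctan (cot \<theta>(s)), where \<theta>(s) is the angle at P(s) between AB and the chord towards C;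
   the integral of the latter is at most pi since arctan takes values in (-pi/2, pi/2). *)

section \<open>The Klein metric in coordinates\<close>

definition wedge :: "complex \<Rightarrow> complex \<Rightarrow> real" where
  "wedge z w = Re z * Im w - Im z * Re w"

text \<open>The Klein metric at p is klein_inner p u v / (1 - |p|^2)^2.\<close>

definition klein_inner :: "complex \<Rightarrow> complex \<Rightarrow> complex \<Rightarrow> real" where
  "klein_inner p u v = u \<bullet> v - wedge p u * wedge p v"

lemma klein_inner_self: "klein_inner p u u = (1 - (norm p)^2) * (norm u)^2 + (p \<bullet> u)^2"
  unfolding klein_inner_def wedge_def inner_complex_def cmod_power2
  by (simp add: power2_eq_square algebra_simps)

lemma klein_inner_gram:
  "klein_inner p u u * klein_inner p v v - (klein_inner p u v)^2 = (1 - (norm p)^2) * (wedge u v)^2"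
  unfolding klein_inner_def wedge_def inner_complex_def cmod_power2
  by (simp add: power2_eq_square algebra_simps)

lemma klein_inner_pos: "norm p < 1 \<Longrightarrow> u \<noteq> 0 \<Longrightarrow> klein_inner p u u > 0"
  unfolding klein_inner_self
  by (intro add_pos_nonneg mult_pos_pos) (auto simp: abs_square_less_1)

lemma klein_inner_nonneg: "norm p \<le> 1 \<Longrightarrow> klein_inner p u u \<ge> 0"
  unfolding klein_inner_self
  by (intro add_nonneg_nonneg mult_nonneg_nonneg) (auto intro: power_le_one)

lemma wedge_le_klein_inner:
  "\<bar>wedge u v\<bar> * sqrt (1 - (norm p)^2) \<le> sqrt (klein_inner p u u) * sqrt (klein_inner p v v)"
proof -
  have "(1 - (norm p)^2) * (wedge u v)^2 \<le> klein_inner p u u * klein_inner p v v"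
    using klein_inner_gram[of p u v] by (metis le_add_same_cancel1 zero_le_power2 diff_eq_eq)
  then have "sqrt ((wedge u v)^2 * (1 - (norm p)^2)) \<le> sqrt (klein_inner p u u * klein_inner p v v)"
    by (simp add: mult.commute)
  then show ?thesis by (simp add: real_sqrt_mult)
qed

lemma wedge_add_scaleR_left: "wedge (p + t *\<^sub>R u) u = wedge p u"
  by (simp add: wedge_def algebra_simps)

text \<open>The numerator of the derivative of klein_inner p u w / sqrt (1 - |p|^2) when p and u both
  move with velocity w.\<close>

lemma klein_inner_derivative_identity:
  "((norm w)^2 - (wedge w u + wedge p w) * wedge p w) * (1 - (norm p)^2)
     + klein_inner p u w * (p \<bullet> w) = (1 - (norm p)^2 + u \<bullet> p) * klein_inner p w w"
  unfolding klein_inner_def wedge_def inner_complex_def cmod_power2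
  by (simp add: power2_eq_square algebra_simps)

lemma continuous_on_klein_inner [continuous_intros]:
  "continuous_on S p \<Longrightarrow> continuous_on S u \<Longrightarrow> continuous_on S v
    \<Longrightarrow> continuous_on S (\<lambda>x. klein_inner (p x) (u x) (v x))"
  unfolding klein_inner_def wedge_def by (intro continuous_intros)

section \<open>Integrals along chords\<close>

lemma has_real_derivative_divide_sqrt:
  fixes N Q :: "real \<Rightarrow> real"
  assumes "(N has_real_derivative N') (at x within S)" "(Q has_real_derivative Q') (at x within S)"
    and "Q x > 0" "D \<noteq> 0"
  shows "((\<lambda>x. N x / (D * sqrt (Q x))) has_real_derivative
           (N' * Q x - N x * Q' / 2) / (D * Q x * sqrt (Q x))) (at x within S)"
proof -
  let ?r = "sqrt (Q x)"
  have "?r > 0" using assms(3) by simp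
  have "((\<lambda>x. N x / (D * sqrt (Q x))) has_real_derivative
      (N' * (D * ?r) - N x * (D * (inverse ?r / 2 * Q'))) / ((D * ?r) * (D * ?r))) (at x within S)"
    using assms \<open>?r > 0\<close>
    by (intro DERIV_divide DERIV_cmult assms(1) DERIV_chain2[OF DERIV_real_sqrt[OF assms(3)] assms(2)])
      auto
  moreover have "(N' * (D * ?r) - N x * (D * (inverse ?r / 2 * Q'))) / ((D * ?r) * (D * ?r))
      = (N' * Q x - N x * Q' / 2) / (D * Q x * ?r)"
    using assms(3,4) \<open>?r > 0\<close> by (simp add: field_simps)
  ultimately show ?thesis by simp
qed

lemma powr_three_halves: "(x::real) > 0 \<Longrightarrow> x powr (3/2) = x * sqrt x"
  by (simp add: powr_add[of x 1 "1/2", simplified] powr_half_sqrt)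

lemma norm_add_scaleR_square:
  fixes c u :: complex
  shows "(norm (c + r *\<^sub>R u))^2 = (norm c)^2 + 2 * r * (c \<bullet> u) + r^2 * (norm u)^2"
  unfolding cmod_power2 inner_complex_def by (simp add: power2_eq_square algebra_simps)

lemma inner_lt_one: "norm (x::'a::real_inner) < 1 \<Longrightarrow> norm y < 1 \<Longrightarrow> x \<bullet> y < 1"
  using norm_cauchy_schwarz[of x y] mult_strict_mono'[of "norm x" 1 "norm y" 1] by force

lemma arcosh_divide_sqrt_eq_ln:
  fixes N P t :: real
  assumes "N > 0" "P > 0" "t \<ge> 0" "N^2 - P = t^2"
  shows "arcosh (N / sqrt P) = ln ((N + t) / sqrt P)"
proof -
  define X where "X = N / sqrt P"
  have X_sq: "X^2 - 1 = (t / sqrt P)^2"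
    using assms by (simp add: X_def power_divide field_simps)
  then have "1\<^sup>2 \<le> X^2"
    using zero_le_power2[of "t / sqrt P"] by (simp only: one_power2)
  then have "1 \<le> X"
    by (rule power2_le_imp_le) (use assms in \<open>simp add: X_def\<close>)
  moreover have "sqrt (X^2 - 1) = t / sqrt P"
    using X_sq assms by simp
  ultimately have "arcosh X = ln (X + t / sqrt P)"
    by (simp add: arcosh_real_def)
  then show ?thesis by (simp add: X_def add_divide_distrib)
qed

lemma arctan_slope_derivative_identity:
  fixes q D DA k L X :: real
  assumes "q > 0" "D > 0" "DA > 0" "k > 0" "k^2 * q + L^2 = D * DA"
  shows "inverse (1 + (L / (k * sqrt q))^2) * (X * DA / (k * q * sqrt q)) = k * X / (D * sqrt q)"
proof -
  have "sqrt q * sqrt q = q" "sqrt q > 0" using assms(1) by auto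
  then have "1 + (L / (k * sqrt q))^2 = D * DA / (k^2 * q)"
    using assms by (simp add: power_divide field_simps power2_eq_square)
  then show ?thesis
    using assms \<open>sqrt q * sqrt q = q\<close> \<open>sqrt q > 0\<close> by (simp add: field_simps power2_eq_square)
qed

definition klein_density :: "complex \<Rightarrow> real" where
  "klein_density z = 1 / (1 - (norm z)^2) powr (3/2)"

definition ray_integral :: "complex \<Rightarrow> complex \<Rightarrow> real" where
  "ray_integral c u = ((1 - (norm c)^2 - c \<bullet> u) / sqrt (1 - (norm (c + u))^2)
                        - sqrt (1 - (norm c)^2)) / klein_inner c u u"

definition angle_rate :: "complex \<Rightarrow> complex \<Rightarrow> real" where
  "angle_rate c u = (1 - (norm c)^2 - c \<bullet> u) / (klein_inner c u u * sqrt (1 - (norm (c + u))^2))"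

lemma has_integral_ray:
  fixes c u :: complex
  assumes in_disk: "\<And>r. r \<in> {0..1} \<Longrightarrow> norm (c + r *\<^sub>R u) < 1" and "u \<noteq> 0"
  shows "((\<lambda>r. r * klein_density (c + r *\<^sub>R u)) has_integral ray_integral c u) {0..1}"
proof -
  define c0 \<beta> D where "c0 = 1 - (norm c)^2" and "\<beta> = c \<bullet> u" and "D = klein_inner c u u"
  define Q where "Q r = 1 - (norm (c + r *\<^sub>R u))^2" for r
  define R where "R r = (c0 - \<beta> * r) / (D * sqrt (Q r))" for r
  have Q_poly: "Q r = c0 - 2 * \<beta> * r - (norm u)^2 * r^2" for r
    unfolding Q_def c0_def \<beta>_def norm_add_scaleR_square by simp
  have Q_pos: "Q r > 0" if "r \<in> {0..1}" for r
    using in_disk[OF that] by (simp add: Q_def abs_square_less_1)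
  have D_pos: "D > 0"
    using klein_inner_pos in_disk[of 0] \<open>u \<noteq> 0\<close> by (simp add: D_def)
  have "(R has_real_derivative r * klein_density (c + r *\<^sub>R u)) (at r within {0..1})"
    if r: "r \<in> {0..1}" for r
  proof -
    have "((\<lambda>r. c0 - \<beta> * r) has_real_derivative - \<beta>) (at r within {0..1})"
      by (auto intro!: derivative_eq_intros)
    moreover have "(Q has_real_derivative - 2 * \<beta> - 2 * (norm u)^2 * r) (at r within {0..1})"
      unfolding Q_poly[abs_def] by (auto intro!: derivative_eq_intros simp: power2_eq_square)
    ultimately have "(R has_real_derivative
        (- \<beta> * Q r - (c0 - \<beta> * r) * (- 2 * \<beta> - 2 * (norm u)^2 * r) / 2) / (D * Q r * sqrt (Q r)))
        (at r within {0..1})"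
      unfolding R_def using Q_pos[OF r] D_pos by (intro has_real_derivative_divide_sqrt) auto
    moreover have "- \<beta> * Q r - (c0 - \<beta> * r) * (- 2 * \<beta> - 2 * (norm u)^2 * r) / 2 = D * r"
      unfolding Q_poly D_def klein_inner_self c0_def \<beta>_def
      by (simp add: field_simps power2_eq_square)
    moreover have "D * r / (D * Q r * sqrt (Q r)) = r * klein_density (c + r *\<^sub>R u)"
      using D_pos Q_pos[OF r] by (simp add: klein_density_def powr_three_halves Q_def)
    ultimately show ?thesis by simp
  qed
  then have "((\<lambda>r. r * klein_density (c + r *\<^sub>R u)) has_integral (R 1 - R 0)) {0..1}"
    by (intro fundamental_theorem_of_calculus)
      (auto simp: has_real_derivative_iff_has_vector_derivative[symmetric])
  moreover have "R 1 - R 0 = ray_integral c u"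
  proof -
    have "c0 > 0" using Q_pos[of 0] by (simp add: Q_def c0_def)
    then have "R 0 = sqrt c0 / D"
      using D_pos by (simp add: R_def Q_def c0_def[symmetric] field_simps)
    then show ?thesis
      by (simp add: R_def Q_def ray_integral_def c0_def \<beta>_def D_def diff_divide_distrib
          mult.commute)
  qed
  ultimately show ?thesis by simp
qed

lemma ray_integral_le:
  fixes c u :: complex
  assumes "norm c < 1" "norm (c + u) < 1" "u \<noteq> 0"
  shows "ray_integral c u \<le> 1 / (sqrt (klein_inner c u u) * sqrt (1 - (norm (c + u))^2))"
proof -
  define c0 q D X where "c0 = 1 - (norm c)^2" and "q = 1 - (norm (c + u))^2"
    and "D = klein_inner c u u" and "X = 1 - (norm c)^2 - c \<bullet> u"
  have pos: "c0 > 0" "q > 0" "D > 0"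
    using assms klein_inner_pos[of c u] by (auto simp: c0_def q_def D_def abs_square_less_1)
  have "X^2 = D + c0 * q"
    unfolding X_def D_def c0_def q_def klein_inner_self cmod_power2 inner_complex_def
    by (simp add: power2_eq_square algebra_simps)
  then have "X \<le> sqrt (D + c0 * q)"
    by (metis abs_ge_self real_sqrt_abs)
  also have "\<dots> \<le> sqrt D + sqrt c0 * sqrt q"
    using pos by (simp add: sqrt_add_le_add_sqrt flip: real_sqrt_mult)
  finally have "X / sqrt q \<le> (sqrt D + sqrt c0 * sqrt q) / sqrt q"
    using pos by (simp add: divide_right_mono)
  then have "X / sqrt q - sqrt c0 \<le> sqrt D / sqrt q"
    using pos by (simp add: add_divide_distrib)
  then have "(X / sqrt q - sqrt c0) / D \<le> sqrt D / sqrt q / D"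
    using pos by (intro divide_right_mono) auto
  then have "ray_integral c u \<le> sqrt D / sqrt q / D"
    unfolding ray_integral_def X_def q_def c0_def D_def .
  also have "\<dots> = 1 / (sqrt D * sqrt q)"
    using pos by (simp add: field_simps)
  finally show ?thesis by (simp add: D_def q_def)
qed

lemma ray_integral_le_angle_rate:
  fixes c u :: complex
  assumes "norm c < 1" "u \<noteq> 0"
  shows "ray_integral c u \<le> angle_rate c u"
proof -
  have "ray_integral c u
      \<le> ((1 - (norm c)^2 - c \<bullet> u) / sqrt (1 - (norm (c + u))^2)) / klein_inner c u u"
    unfolding ray_integral_def using klein_inner_pos[OF assms] assms(1)
    by (intro divide_right_mono) (auto intro: power_le_one)
  then show ?thesis
    unfolding angle_rate_def by (metis divide_divide_eq_left mult.commute)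
qed

lemma wedge_mult_ray_integral_le_length:
  fixes c u w :: complex
  assumes "norm c < 1" "norm (c + u) < 1" "u \<noteq> 0"
  shows "\<bar>wedge u w\<bar> * ray_integral c u \<le> sqrt (klein_inner (c + u) w w) / (1 - (norm (c + u))^2)"
proof -
  define p q where "p = c + u" and "q = 1 - (norm (c + u))^2"
  have "klein_inner p u u = klein_inner c u u"
    by (simp add: p_def klein_inner_def wedge_def algebra_simps)
  have q_pos: "q > 0" and D_pos: "klein_inner p u u > 0"
    using assms klein_inner_pos[of c u] \<open>?this\<close> by (auto simp: p_def q_def abs_square_less_1)
  have "\<bar>wedge u w\<bar> * ray_integral c u \<le> \<bar>wedge u w\<bar> / (sqrt (klein_inner p u u) * sqrt q)"
    using mult_left_mono[OF ray_integral_le[OF assms] abs_ge_zero[of "wedge u w"]]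
      \<open>klein_inner p u u = klein_inner c u u\<close>
    by (simp add: p_def q_def)
  also have "\<dots> = \<bar>wedge u w\<bar> * sqrt q / (sqrt (klein_inner p u u) * q)"
    using q_pos
    by (metis divide_divide_eq_right less_eq_real_def real_div_sqrt times_divide_eq_right)
  also have "\<dots> \<le> sqrt (klein_inner p u u) * sqrt (klein_inner p w w)
      / (sqrt (klein_inner p u u) * q)"
    using wedge_le_klein_inner[of u w p] q_pos D_pos
    by (intro divide_right_mono) (auto simp: p_def q_def)
  also have "\<dots> = sqrt (klein_inner p w w) / q"
    using D_pos by simp
  finally show ?thesis by (simp add: p_def q_def)
qed

lemma has_integral_arcosh_quadratic:
  fixes c0 b g t :: real
  assumes q_pos: "\<And>s. s \<in> {0..1} \<Longrightarrow> c0 - 2 * b * s - g * s^2 > 0"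
    and N_pos: "\<And>s. s \<in> {0..1} \<Longrightarrow> c0 - b * s > 0"
    and "t \<ge> 0" and t_sq: "t^2 = c0 * g + b^2"
  shows "((\<lambda>s. t / (c0 - 2 * b * s - g * s^2)) has_integral
           arcosh ((c0 - b) / sqrt (c0 * (c0 - 2 * b - g)))) {0..1}"
proof -
  define q M where "q s = c0 - 2 * b * s - g * s^2" and "M s = c0 - b * s + t * s" for s
  define H where "H s = ln (M s) - ln (c0 * q s) / 2" for s
  have c0_pos: "c0 > 0"
    using q_pos[of 0] by simp
  have M_pos: "M s > 0" if "s \<in> {0..1}" for s
    using N_pos[OF that] mult_nonneg_nonneg[OF \<open>t \<ge> 0\<close>, of s] that by (simp add: M_def)
  have "(H has_real_derivative t / q s) (at s within {0..1})" if s: "s \<in> {0..1}" for s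
  proof -
    have "(M has_real_derivative t - b) (at s within {0..1})"
      unfolding M_def by (auto intro!: derivative_eq_intros)
    moreover have "((\<lambda>s. c0 * q s) has_real_derivative c0 * (- 2 * b - 2 * g * s))
        (at s within {0..1})"
      unfolding q_def by (auto intro!: derivative_eq_intros simp: power2_eq_square)
    ultimately have deriv: "(H has_real_derivative
        1 / M s * (t - b) - 1 / (c0 * q s) * (c0 * (- 2 * b - 2 * g * s)) / 2) (at s within {0..1})"
      unfolding H_def using M_pos[OF s] q_pos[OF s] c0_pos
      by (intro DERIV_diff DERIV_cdivide DERIV_chain2[OF DERIV_ln_divide]) (auto simp: q_def)
    have "q s > 0"
      using q_pos[OF s] by (simp add: q_def)
    then have "1 / M s * (t - b) - 1 / (c0 * q s) * (c0 * (- 2 * b - 2 * g * s)) / 2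
        = ((t - b) * q s + (b + g * s) * M s) / (M s * q s)"
      using M_pos[OF s] c0_pos by (simp add: field_simps)
    also have "(t - b) * q s + (b + g * s) * M s = t * M s"
      unfolding q_def M_def using t_sq by (simp add: algebra_simps power2_eq_square)
    finally show ?thesis
      using deriv M_pos[OF s] by simp
  qed
  then have "((\<lambda>s. t / q s) has_integral (H 1 - H 0)) {0..1}"
    by (intro fundamental_theorem_of_calculus)
      (auto simp: has_real_derivative_iff_has_vector_derivative[symmetric])
  moreover have "H 0 = 0"
    using c0_pos by (simp add: H_def M_def q_def ln_mult)
  moreover have "H 1 = arcosh ((c0 - b) / sqrt (c0 * q 1))"
  proof -
    have "(c0 - b)^2 - c0 * q 1 = t^2"
      unfolding q_def t_sq by (simp add: power2_eq_square algebra_simps)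
    then have "arcosh ((c0 - b) / sqrt (c0 * q 1)) = ln (M 1 / sqrt (c0 * q 1))"
      using N_pos[of 1] c0_pos q_pos[of 1] \<open>t \<ge> 0\<close>
      by (subst arcosh_divide_sqrt_eq_ln) (auto simp: M_def q_def)
    also have "\<dots> = H 1"
      using M_pos[of 1] c0_pos q_pos[of 1] by (simp add: H_def ln_div ln_sqrt q_def)
    finally show ?thesis ..
  qed
  ultimately show ?thesis
    by (simp add: q_def)
qed

lemma has_integral_chord_length:
  fixes a w :: complex
  assumes in_disk: "\<And>s. s \<in> {0..1} \<Longrightarrow> norm (a + s *\<^sub>R w) < 1"
  shows "((\<lambda>s. sqrt (klein_inner (a + s *\<^sub>R w) w w) / (1 - (norm (a + s *\<^sub>R w))^2))
           has_integral kdist a (a + w)) {0..1}"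
proof -
  define c0 b g where "c0 = 1 - (norm a)^2" and "b = a \<bullet> w" and "g = (norm w)^2"
  have q_eq: "1 - (norm (a + s *\<^sub>R w))^2 = c0 - 2 * b * s - g * s^2" for s
    unfolding c0_def b_def g_def norm_add_scaleR_square by simp
  have N_eq: "1 - a \<bullet> (a + s *\<^sub>R w) = c0 - b * s" for s
    by (simp add: c0_def b_def inner_add_right power2_norm_eq_inner)
  have "((\<lambda>s. sqrt (klein_inner a w w) / (c0 - 2 * b * s - g * s^2)) has_integral
          arcosh ((c0 - b) / sqrt (c0 * (c0 - 2 * b - g)))) {0..1}"
  proof (rule has_integral_arcosh_quadratic)
    show "c0 - 2 * b * s - g * s^2 > 0" "c0 - b * s > 0" if "s \<in> {0..1}" for s
      using in_disk[OF that] inner_lt_one[OF in_disk[of 0] in_disk[OF that]]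
      by (simp_all flip: q_eq N_eq add: abs_square_less_1)
    show "sqrt (klein_inner a w w) \<ge> 0" "(sqrt (klein_inner a w w))^2 = c0 * g + b^2"
      using klein_inner_nonneg[of a w] in_disk[of 0]
      by (auto simp: klein_inner_self c0_def b_def g_def)
  qed
  moreover have "klein_inner (a + s *\<^sub>R w) w w = klein_inner a w w" for s
    by (simp add: klein_inner_def wedge_add_scaleR_left)
  moreover have "kdist a (a + w) = arcosh ((c0 - b) / sqrt (c0 * (c0 - 2 * b - g)))"
  proof -
    have "1 - (norm (a + w))^2 = c0 - 2 * b - g" "1 - a \<bullet> (a + w) = c0 - b"
      using q_eq[of 1] N_eq[of 1] by simp_all
    then show ?thesis
      unfolding kdist_def c0_def[symmetric] by (simp only:)
  qed
  ultimately show ?thesis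
    by (simp only: q_eq)
qed

text \<open>The function differentiated is arctan (cot \<theta>(s)), where \<theta>(s) is the Klein angle at
  a + s w between w and the chord towards c.\<close>

lemma has_real_derivative_chord_angle:
  fixes a w c :: complex
  assumes in_disk: "norm (a + s *\<^sub>R w) < 1" and nondegenerate: "wedge (a - c) w \<noteq> 0"
  shows "((\<lambda>s. arctan (klein_inner (a + s *\<^sub>R w) (a + s *\<^sub>R w - c) w /
             (\<bar>wedge (a - c) w\<bar> * sqrt (1 - (norm (a + s *\<^sub>R w))^2))))
          has_real_derivative \<bar>wedge (a - c) w\<bar> * angle_rate c (a + s *\<^sub>R w - c)) (at s within S)"
proof -
  define k where "k = \<bar>wedge (a - c) w\<bar>"
  define p u where "p s = a + s *\<^sub>R w" and "u s = a + s *\<^sub>R w - c" for s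
  define q L where "q s = 1 - (norm (p s))^2" and "L s = klein_inner (p s) (u s) w" for s
  define X D DA where "X = 1 - (norm (p s))^2 + u s \<bullet> p s"
    and "D = klein_inner (p s) (u s) (u s)" and "DA = klein_inner (p s) w w"
  have k_pos: "k > 0"
    using nondegenerate by (simp add: k_def)
  have wedge_u: "wedge (u s) w = wedge (a - c) w"
    by (simp add: u_def wedge_def algebra_simps)
  have q_pos: "q s > 0"
    using in_disk by (simp add: q_def p_def abs_square_less_1)
  have D_pos: "D > 0" and DA_pos: "DA > 0"
    using in_disk wedge_u nondegenerate unfolding D_def DA_def
    by (auto intro!: klein_inner_pos simp: p_def wedge_def)
  have "(L has_real_derivative (norm w)^2 - (wedge w (u s) + wedge (p s) w) * wedge (p s) w)
      (at s within S)"
    unfolding L_def p_def u_def klein_inner_def wedge_def inner_complex_def cmod_power2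
    by simp (auto intro!: derivative_eq_intros simp: algebra_simps power2_eq_square)
  moreover have "(q has_real_derivative - 2 * (p s \<bullet> w)) (at s within S)"
    unfolding q_def p_def norm_add_scaleR_square
    by (auto intro!: derivative_eq_intros simp: algebra_simps power2_eq_square dot_square_norm)
  ultimately have "((\<lambda>s. L s / (k * sqrt (q s))) has_real_derivative
      (((norm w)^2 - (wedge w (u s) + wedge (p s) w) * wedge (p s) w) * q s
        - L s * (- 2 * (p s \<bullet> w)) / 2)
        / (k * q s * sqrt (q s))) (at s within S)"
    using q_pos k_pos by (intro has_real_derivative_divide_sqrt) auto
  also have "((norm w)^2 - (wedge w (u s) + wedge (p s) w) * wedge (p s) w) * q s
      - L s * (- 2 * (p s \<bullet> w)) / 2 = X * DA"
    using klein_inner_derivative_identity[of w "u s" "p s"] by (simp add: q_def L_def X_def DA_def)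
  finally have "((\<lambda>s. arctan (L s / (k * sqrt (q s)))) has_real_derivative
      inverse (1 + (L s / (k * sqrt (q s)))^2) * (X * DA / (k * q s * sqrt (q s)))) (at s within S)"
    by (rule DERIV_chain2[OF DERIV_arctan])
  moreover have "k^2 * q s + (L s)^2 = D * DA"
    using klein_inner_gram[of "p s" "u s" w] wedge_u
    by (simp add: k_def q_def L_def D_def DA_def algebra_simps)
  moreover have "X = 1 - (norm c)^2 - c \<bullet> u s"
    unfolding X_def p_def u_def cmod_power2 inner_complex_def
    by (simp add: power2_eq_square algebra_simps)
  moreover have "D = klein_inner c (u s) (u s)"
    by (simp add: D_def p_def u_def klein_inner_def wedge_def algebra_simps)
  ultimately show ?thesis
    using arctan_slope_derivative_identity[OF q_pos D_pos DA_pos k_pos]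
    by (simp add: angle_rate_def k_def p_def u_def q_def L_def)
qed

lemma has_integral_angle_rate:
  fixes a w c :: complex
  assumes "\<And>s. s \<in> {0..1} \<Longrightarrow> norm (a + s *\<^sub>R w) < 1" and "wedge (a - c) w \<noteq> 0"
  shows "\<exists>\<theta> \<le> pi.
           ((\<lambda>s. \<bar>wedge (a - c) w\<bar> * angle_rate c (a + s *\<^sub>R w - c)) has_integral \<theta>) {0..1}"
proof -
  define E where "E s = arctan (klein_inner (a + s *\<^sub>R w) (a + s *\<^sub>R w - c) w /
    (\<bar>wedge (a - c) w\<bar> * sqrt (1 - (norm (a + s *\<^sub>R w))^2)))" for s
  have "(E has_real_derivative \<bar>wedge (a - c) w\<bar> * angle_rate c (a + s *\<^sub>R w - c))
      (at s within {0..1})" if "s \<in> {0..1}" for s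
    unfolding E_def using assms that by (intro has_real_derivative_chord_angle) auto
  then have "((\<lambda>s. \<bar>wedge (a - c) w\<bar> * angle_rate c (a + s *\<^sub>R w - c))
      has_integral (E 1 - E 0)) {0..1}"
    by (intro fundamental_theorem_of_calculus)
      (auto simp: has_real_derivative_iff_has_vector_derivative[symmetric])
  moreover have "E 1 - E 0 \<le> pi"
  proof -
    have "- (pi / 2) < E s" "E s < pi / 2" for s
      unfolding E_def by (rule arctan_lbound, rule arctan_ubound)
    from this(1)[of 0] this(2)[of 1] show ?thesis by linarith
  qed
  ultimately show ?thesis by blast
qed

lemma integral_ray_integral_le_kdist_pi:
  fixes a w c :: complex
  assumes in_disk: "\<And>s. s \<in> {0..1} \<Longrightarrow> norm (a + s *\<^sub>R w) < 1" and "norm c < 1"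
    and nondegenerate: "wedge (a - c) w \<noteq> 0"
  shows "integral {0..1} (\<lambda>s. \<bar>wedge (a - c) w\<bar> * ray_integral c (a + s *\<^sub>R w - c))
           \<le> min (kdist a (a + w)) pi"
proof -
  define F where "F = (\<lambda>s. \<bar>wedge (a - c) w\<bar> * ray_integral c (a + s *\<^sub>R w - c))"
  have wedge_eq: "wedge (a + s *\<^sub>R w - c) w = wedge (a - c) w" for s
    by (simp add: wedge_def algebra_simps)
  have u_nz: "a + s *\<^sub>R w - c \<noteq> 0" for s
    using wedge_eq[of s] nondegenerate by (auto simp: wedge_def)
  have "continuous_on {0..1} F"
    unfolding F_def ray_integral_def using in_disk klein_inner_pos[OF \<open>norm c < 1\<close> u_nz]
    by (intro continuous_intros) (auto simp: abs_square_less_1 less_imp_neq[symmetric])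
  then have F: "(F has_integral integral {0..1} F) {0..1}"
    by (intro integrable_integral integrable_continuous_interval)
  have "integral {0..1} F \<le> kdist a (a + w)"
    using wedge_mult_ray_integral_le_length[OF \<open>norm c < 1\<close>, of "a + s *\<^sub>R w - c" w for s]
      in_disk wedge_eq u_nz
    by (intro has_integral_le[OF F has_integral_chord_length[OF in_disk]]) (auto simp: F_def)
  moreover obtain \<theta> where "\<theta> \<le> pi"
    and angle: "((\<lambda>s. \<bar>wedge (a - c) w\<bar> * angle_rate c (a + s *\<^sub>R w - c)) has_integral \<theta>) {0..1}"
    using has_integral_angle_rate[OF in_disk nondegenerate] by blast
  moreover have "integral {0..1} F \<le> \<theta>"
    using ray_integral_le_angle_rate[OF \<open>norm c < 1\<close> u_nz]
    by (intro has_integral_le[OF F angle]) (simp add: F_def mult_left_mono)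
  ultimately show ?thesis
    unfolding F_def[symmetric] min.bounded_iff by linarith
qed

section \<open>Coordinates on the plane and Fubini\<close>

lemma has_integral_box_bijection:
  fixes g :: "'a::euclidean_space \<Rightarrow> 'b::euclidean_space" and h :: "'b \<Rightarrow> 'a"
    and f :: "'b \<Rightarrow> 'c::banach"
  assumes hg: "\<And>x. h (g x) = x" and gh: "\<And>y. g (h y) = y"
    and cont: "\<And>x. continuous (at x) g"
    and g_box: "\<And>u v. \<exists>w z. g ` cbox u v = cbox w z"
    and h_box: "\<And>u v. \<exists>w z. h ` cbox u v = cbox w z"
    and measure_eq: "\<And>u v. measure lborel (g ` cbox u v) = measure lborel (cbox u v)"
    and f: "(f has_integral i) S" and "bounded S"
  shows "((\<lambda>x. f (g x)) has_integral i) (h ` S)"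
proof -
  obtain a b where S: "S \<subseteq> cbox a b"
    using \<open>bounded S\<close> bounded_subset_cbox_symmetric by metis
  define F where "F = (\<lambda>x. if x \<in> S then f x else 0)"
  have "(F has_integral i) (cbox a b)"
    unfolding F_def has_integral_restrict[OF S] by (rule f)
  from has_integral_twiddle[of 1 h g, OF _ hg gh cont g_box h_box _ this] measure_eq
  have "((\<lambda>x. F (g x)) has_integral i) (h ` cbox a b)"
    by simp
  moreover have "F (g x) = (if x \<in> h ` S then f (g x) else 0)" for x
    unfolding F_def by (metis gh hg image_iff)
  moreover have "h ` S \<subseteq> h ` cbox a b"
    using S by auto
  ultimately show ?thesis by simp
qed

definition vec2_of_complex :: "complex \<Rightarrow> real^2" where
  "vec2_of_complex z = vector [Re z, Im z]"

definition complex_of_vec2 :: "real^2 \<Rightarrow> complex" where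
  "complex_of_vec2 v = Complex (v$1) (v$2)"

lemma complex_of_vec2_inverse [simp]: "complex_of_vec2 (vec2_of_complex z) = z"
  by (simp add: complex_of_vec2_def vec2_of_complex_def complex_eq_iff)

lemma vec2_of_complex_inverse [simp]: "vec2_of_complex (complex_of_vec2 v) = v"
  by (simp add: complex_of_vec2_def vec2_of_complex_def vec_eq_iff forall_2)

lemma linear_vec2_of_complex: "linear vec2_of_complex"
  by (rule linearI) (simp_all add: vec2_of_complex_def vec_eq_iff forall_2)

lemma vec2_of_complex_cbox:
  "vec2_of_complex ` cbox u v = cbox (vec2_of_complex u) (vec2_of_complex v)"
proof -
  have "vec2_of_complex ` X = complex_of_vec2 -` X" for X
    by (auto simp: image_iff) (metis vec2_of_complex_inverse)
  then show ?thesis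
    by (auto simp: mem_box_cart forall_2 cbox_complex_eq complex_of_vec2_def vec2_of_complex_def)
qed

lemma complex_of_vec2_cbox:
  "complex_of_vec2 ` cbox u v = cbox (complex_of_vec2 u) (complex_of_vec2 v)"
proof -
  have "complex_of_vec2 ` X = vec2_of_complex -` X" for X
    by (auto simp: image_iff) (metis complex_of_vec2_inverse)
  then show ?thesis
    by (auto simp: mem_box_cart forall_2 cbox_complex_eq complex_of_vec2_def vec2_of_complex_def)
qed

lemma has_integral_complex_of_vec2:
  fixes f :: "complex \<Rightarrow> 'c::banach"
  assumes "((\<lambda>v. f (complex_of_vec2 v)) has_integral i) S" "bounded S"
  shows "(f has_integral i) (complex_of_vec2 ` S)"
proof (rule has_integral_box_bijection[where g = vec2_of_complex and h = complex_of_vec2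
      and f = "\<lambda>v. f (complex_of_vec2 v)", simplified,
      OF _ _ _ _ assms])
  show "continuous (at z) vec2_of_complex" for z
    using linear_vec2_of_complex linear_continuous_at linear_conv_bounded_linear by blast
  show "\<exists>w z. vec2_of_complex ` cbox u v = cbox w z" "\<exists>w z. complex_of_vec2 ` cbox u' v' = cbox w z"
    for u v u' v'
    using vec2_of_complex_cbox complex_of_vec2_cbox by blast+
  show "measure lborel (vec2_of_complex ` cbox u v) = measure lborel (cbox u v)" for u v
  proof -
    have "cbox (vec2_of_complex u) (vec2_of_complex v) = {} \<longleftrightarrow> cbox u v = {}"
      by (metis image_is_empty vec2_of_complex_cbox)
    then show ?thesis unfolding vec2_of_complex_cbox
      by (simp add: content_cbox_if_cart content_cbox_if UNIV_2 Basis_complex_def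
          vec2_of_complex_def)
  qed
qed

definition vec2_of_pair :: "real \<times> real \<Rightarrow> real^2" where
  "vec2_of_pair p = vector [fst p, snd p]"

definition pair_of_vec2 :: "real^2 \<Rightarrow> real \<times> real" where
  "pair_of_vec2 v = (v$1, v$2)"

lemma pair_of_vec2_inverse [simp]: "pair_of_vec2 (vec2_of_pair p) = p"
  by (simp add: pair_of_vec2_def vec2_of_pair_def)

lemma vec2_of_pair_inverse [simp]: "vec2_of_pair (pair_of_vec2 v) = v"
  by (simp add: pair_of_vec2_def vec2_of_pair_def vec_eq_iff forall_2)

lemma linear_vec2_of_pair: "linear vec2_of_pair"
  by (rule linearI) (simp_all add: vec2_of_pair_def vec_eq_iff forall_2)

lemma vec2_of_pair_cbox: "vec2_of_pair ` cbox u v = cbox (vec2_of_pair u) (vec2_of_pair v)"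
proof -
  have "vec2_of_pair ` X = pair_of_vec2 -` X" for X
    by (auto simp: image_iff) (metis vec2_of_pair_inverse)
  then show ?thesis
    by (cases u; cases v)
      (auto simp: mem_box_cart forall_2 cbox_Pair_eq pair_of_vec2_def vec2_of_pair_def)
qed

lemma pair_of_vec2_cbox: "pair_of_vec2 ` cbox u v = cbox (pair_of_vec2 u) (pair_of_vec2 v)"
proof -
  have "pair_of_vec2 ` X = vec2_of_pair -` X" for X
    by (auto simp: image_iff) (metis pair_of_vec2_inverse)
  then show ?thesis
    by (auto simp: mem_box_cart forall_2 cbox_Pair_eq pair_of_vec2_def vec2_of_pair_def)
qed

lemma integral_vec2_iterated:
  fixes \<Phi> :: "real^2 \<Rightarrow> real"
  assumes "continuous_on (cbox 0 1) \<Phi>"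
  shows "integral (cbox 0 1) \<Phi> = integral {0..1} (\<lambda>s. integral {0..1} (\<lambda>r. \<Phi> (vector [s, r])))"
proof -
  have "vector [0, 0] = (0::real^2)" "vector [1, 1] = (1::real^2)"
    by (simp_all add: vec_eq_iff forall_2)
  then have box01: "pair_of_vec2 ` cbox 0 1 = cbox (0, 0) (1, 1)"
    "vec2_of_pair ` cbox (0, 0) (1, 1) = cbox 0 1"
    unfolding pair_of_vec2_cbox vec2_of_pair_cbox
    by (simp_all add: pair_of_vec2_def vec2_of_pair_def)
  have measure_eq: "measure lborel (vec2_of_pair ` cbox u v) = measure lborel (cbox u v)" for u v
  proof -
    obtain u1 u2 v1 v2 where uv: "u = (u1, u2)" "v = (v1, v2)" by (cases u; cases v)
    have "cbox (vec2_of_pair u) (vec2_of_pair v) = {} \<longleftrightarrow> cbox u v = {}"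
      by (metis image_is_empty vec2_of_pair_cbox)
    then show ?thesis unfolding vec2_of_pair_cbox
      by (simp add: content_cbox_if_cart content_Pair UNIV_2 vec2_of_pair_def uv
          cbox_Pair_eq_0)
  qed
  have "((\<lambda>x. \<Phi> (vec2_of_pair x)) has_integral integral (cbox 0 1) \<Phi>) (pair_of_vec2 ` cbox 0 1)"
  proof (rule has_integral_box_bijection[where g = vec2_of_pair and h = pair_of_vec2])
    show "continuous (at x) vec2_of_pair" for x
      using linear_vec2_of_pair linear_continuous_at linear_conv_bounded_linear by blast
    show "\<exists>w z. vec2_of_pair ` cbox u v = cbox w z" "\<exists>w z. pair_of_vec2 ` cbox u' v' = cbox w z"
      for u v u' v'
      using vec2_of_pair_cbox pair_of_vec2_cbox by blast+
    show "(\<Phi> has_integral integral (cbox 0 1) \<Phi>) (cbox 0 1)"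
      using integrable_continuous[OF assms] by (rule integrable_integral)
  qed (simp_all add: measure_eq)
  moreover have "continuous_on (cbox (0, 0) (1, 1)) (\<lambda>x. \<Phi> (vec2_of_pair x))"
    using linear_vec2_of_pair linear_continuous_on linear_conv_bounded_linear box01(2)
    by (intro continuous_on_compose2[OF assms]) auto
  ultimately show ?thesis
    using integral_prod_continuous[of 0 0 1 1 "\<lambda>x. \<Phi> (vec2_of_pair x)"] box01(1)
    by (simp add: integral_unique vec2_of_pair_def)
qed

section \<open>The area of a triangle as an integral over chords\<close>

lemma convex_hull_3_eq_rays:
  fixes A B C :: "'a::real_vector"
  shows "convex hull {A, B, C} = {C + r *\<^sub>R (A + s *\<^sub>R (B - A) - C) | r s. r \<in> {0..1} \<and> s \<in> {0..1}}"
  (is "_ = ?R")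
proof
  show "convex hull {A, B, C} \<subseteq> ?R"
  proof
    fix z assume "z \<in> convex hull {A, B, C}"
    then obtain u v w where uvw: "0 \<le> u" "0 \<le> v" "0 \<le> w" "u + v + w = 1"
      and z: "z = u *\<^sub>R A + v *\<^sub>R B + w *\<^sub>R C"
      unfolding convex_hull_3 by auto
    define r s where "r = u + v" and "s = (if u + v = 0 then 0 else v / (u + v))"
    have "r \<in> {0..1}" "s \<in> {0..1}"
      using uvw by (auto simp: r_def s_def divide_simps)
    moreover have "z = C + r *\<^sub>R (A + s *\<^sub>R (B - A) - C)"
    proof (cases "u + v = 0")
      case True
      then have "u = 0" "v = 0" using uvw by auto
      then show ?thesis using uvw z by (simp add: r_def)
    next
      case False
      then have coeffs: "u = r * (1 - s)" "v = r * s" "w = 1 - r"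
        using uvw by (auto simp: r_def s_def field_simps)
      show ?thesis unfolding z coeffs by (simp add: algebra_simps)
    qed
    ultimately show "z \<in> ?R" by blast
  qed
next
  show "?R \<subseteq> convex hull {A, B, C}"
  proof
    fix z assume "z \<in> ?R"
    then obtain r s where rs: "r \<in> {0..1}" "s \<in> {0..1}" and z: "z = C + r *\<^sub>R (A + s *\<^sub>R (B - A) - C)"
      by blast
    have "z = (r * (1 - s)) *\<^sub>R A + (r * s) *\<^sub>R B + (1 - r) *\<^sub>R C"
      using z by (simp add: algebra_simps)
    moreover have "0 \<le> r * (1 - s)" "0 \<le> r * s" "0 \<le> 1 - r" "r * (1 - s) + r * s + (1 - r) = 1"
      using rs by (auto simp: algebra_simps mult_left_le)
    ultimately show "z \<in> convex hull {A, B, C}"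
      unfolding convex_hull_3 by blast
  qed
qed

lemma hdisk_eq_ball: "hdisk = ball 0 1"
  by (auto simp: hdisk_def)

lemma convex_hull_3_subset_hdisk:
  "A \<in> hdisk \<Longrightarrow> B \<in> hdisk \<Longrightarrow> C \<in> hdisk \<Longrightarrow> convex hull {A, B, C} \<subseteq> hdisk"
  unfolding hdisk_eq_ball by (simp add: hull_minimal)

lemma ray_in_hdisk:
  assumes "A \<in> hdisk" "B \<in> hdisk" "C \<in> hdisk" "r \<in> {0..1}" "s \<in> {0..1}"
  shows "C + r *\<^sub>R (A + s *\<^sub>R (B - A) - C) \<in> hdisk"
  using convex_hull_3_subset_hdisk[OF assms(1-3)] assms(4,5) unfolding convex_hull_3_eq_rays
  by blast

lemma continuous_on_klein_density:
  assumes "continuous_on S f" "\<And>x. x \<in> S \<Longrightarrow> f x \<in> hdisk"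
  shows "continuous_on S (\<lambda>x. klein_density (f x))"
proof -
  have pos: "1 - (norm (f x))^2 > 0" if "x \<in> S" for x
    using assms(2)[OF that] by (simp add: hdisk_def abs_square_less_1)
  show ?thesis
    unfolding klein_density_def by (intro continuous_intros assms(1)) (use pos in force)+
qed

lemma harea_eq: "harea S = integral S klein_density"
  by (simp add: harea_def klein_density_def[abs_def])

definition triangle_chart :: "complex \<Rightarrow> complex \<Rightarrow> complex \<Rightarrow> real^2 \<Rightarrow> complex" where
  "triangle_chart A B C x = C + (x$2) *\<^sub>R (A + (x$1) *\<^sub>R (B - A) - C)"

lemma triangle_chart_image: "triangle_chart A B C ` cbox 0 1 = convex hull {A, B, C}"
proof
  have in_box: "x \<in> cbox 0 1 \<longleftrightarrow> x$1 \<in> {0..1} \<and> x$2 \<in> {0..1}" for x :: "real^2"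
    by (auto simp: mem_box_cart forall_2)
  show "triangle_chart A B C ` cbox 0 1 \<subseteq> convex hull {A, B, C}"
    unfolding convex_hull_3_eq_rays triangle_chart_def using in_box by blast
  show "convex hull {A, B, C} \<subseteq> triangle_chart A B C ` cbox 0 1"
  proof
    fix z assume "z \<in> convex hull {A, B, C}"
    then obtain r s where "r \<in> {0..1}" "s \<in> {0..1}" "z = C + r *\<^sub>R (A + s *\<^sub>R (B - A) - C)"
      unfolding convex_hull_3_eq_rays by blast
    then have "vector [s, r] \<in> cbox (0::real^2) 1" "z = triangle_chart A B C (vector [s, r])"
      by (simp_all add: in_box triangle_chart_def)
    then show "z \<in> triangle_chart A B C ` cbox 0 1" by blast
  qed
qed

lemma vec_nth_has_derivative: "((\<lambda>x::real^'n. x$i) has_derivative (\<lambda>v. v$i)) (at x within S)"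
  using bounded_linear_vec_nth bounded_linear.has_derivative has_derivative_ident by blast

text \<open>The chart collapses the side x$2 = 0 to the point C, so the change of variables only gives
  an inequality.\<close>

lemma harea_htriangle_le_chart_integral:
  assumes "A \<in> hdisk" "B \<in> hdisk" "C \<in> hdisk"
  defines "\<delta> \<equiv> wedge (A - C) (B - A)"
  shows "continuous_on (cbox 0 1) (\<lambda>x. \<bar>x$2 * \<delta>\<bar> * klein_density (triangle_chart A B C x))"
    and "harea (htriangle A B C)
           \<le> integral (cbox 0 1) (\<lambda>x. \<bar>x$2 * \<delta>\<bar> * klein_density (triangle_chart A B C x))"
proof -
  let ?S = "cbox (0::real^2) 1" and ?T = "triangle_chart A B C"
  define c U W where "c = vec2_of_complex C" and "U = vec2_of_complex (A - C)"
    and "W = vec2_of_complex (B - A)"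
  define G where "G x = c + (x$2) *\<^sub>R (U + (x$1) *\<^sub>R W)" for x :: "real^2"
  define G' where "G' x v = (v$2) *\<^sub>R (U + (x$1) *\<^sub>R W) + (x$2) *\<^sub>R ((v$1) *\<^sub>R W)" for x v :: "real^2"
  have G_T: "complex_of_vec2 (G x) = ?T x" for x
    by (simp add: G_def triangle_chart_def c_def U_def W_def complex_of_vec2_def vec2_of_complex_def
        complex_eq_iff algebra_simps)
  have "(G has_derivative G' x) (at x within ?S)" for x
    unfolding G_def G'_def
    by (auto intro!: derivative_eq_intros vec_nth_has_derivative simp: algebra_simps)
  moreover have "det (matrix (G' x)) = - (x$2 * \<delta>)" for x
    by (simp add: det_2 matrix_def G'_def axis_def U_def W_def vec2_of_complex_def \<delta>_def wedge_def
        algebra_simps)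
  moreover show cont: "continuous_on ?S (\<lambda>x. \<bar>x$2 * \<delta>\<bar> * klein_density (?T x))"
    using triangle_chart_image[of A B C] convex_hull_3_subset_hdisk[OF assms(1-3)]
    unfolding triangle_chart_def
    by (intro continuous_intros continuous_on_klein_density) (auto simp: triangle_chart_def)
  ultimately have int: "(\<lambda>v. klein_density (complex_of_vec2 v)) integrable_on G ` ?S"
    and le: "integral (G ` ?S) (\<lambda>v. klein_density (complex_of_vec2 v))
               \<le> integral ?S (\<lambda>x. \<bar>x$2 * \<delta>\<bar> * klein_density (?T x))"
    using integral_on_image_ubound_nonneg[of ?S "\<lambda>v. klein_density (complex_of_vec2 v)" G G']
      integrable_continuous[OF cont]
    by (auto simp: G_T klein_density_def)
  have "bounded (G ` ?S)"
    unfolding G_def by (intro compact_imp_bounded compact_continuous_image continuous_intros) auto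
  from has_integral_complex_of_vec2[OF integrable_integral[OF int] this]
  have "(klein_density has_integral integral (G ` ?S) (\<lambda>v. klein_density (complex_of_vec2 v)))
          (convex hull {A, B, C})"
    using triangle_chart_image[of A B C] G_T by (simp add: image_image)
  then have "harea (htriangle A B C) = integral (G ` ?S) (\<lambda>v. klein_density (complex_of_vec2 v))"
    by (simp add: harea_eq htriangle_def integral_unique)
  with le show "harea (htriangle A B C) \<le> integral ?S (\<lambda>x. \<bar>x$2 * \<delta>\<bar> * klein_density (?T x))"
    by simp
qed

lemma harea_htriangle_le:
  assumes "A \<in> hdisk" "B \<in> hdisk" "C \<in> hdisk"
  shows "harea (htriangle A B C) \<le> \<bar>wedge (A - C) (B - A)\<bar> * integral {0..1}
           (\<lambda>s. integral {0..1} (\<lambda>r. r * klein_density (C + r *\<^sub>R (A + s *\<^sub>R (B - A) - C))))"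
proof -
  define \<delta> where "\<delta> = wedge (A - C) (B - A)"
  have "harea (htriangle A B C)
      \<le> integral (cbox 0 1) (\<lambda>x. \<bar>x$2 * \<delta>\<bar> * klein_density (triangle_chart A B C x))"
    using harea_htriangle_le_chart_integral[OF assms] by (simp add: \<delta>_def)
  also have "\<dots> = integral {0..1} (\<lambda>s. integral {0..1}
      (\<lambda>r. \<bar>r * \<delta>\<bar> * klein_density (triangle_chart A B C (vector [s, r]))))"
    using integral_vec2_iterated harea_htriangle_le_chart_integral(1)[OF assms] by (simp add: \<delta>_def)
  also have "\<dots> = \<bar>\<delta>\<bar> * integral {0..1}
      (\<lambda>s. integral {0..1} (\<lambda>r. r * klein_density (C + r *\<^sub>R (A + s *\<^sub>R (B - A) - C))))"
  proof -
    have "integral {0..1} (\<lambda>r. \<bar>r * \<delta>\<bar> * klein_density (triangle_chart A B C (vector [s, r])))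
        = integral {0..1} (\<lambda>r. \<bar>\<delta>\<bar> * (r * klein_density (C + r *\<^sub>R (A + s *\<^sub>R (B - A) - C))))" for s
      by (rule integral_cong) (simp add: triangle_chart_def abs_mult)
    then show ?thesis by simp
  qed
  finally show ?thesis by (simp add: \<delta>_def)
qed

theorem lemma14:
  fixes a :: real and A B C :: complex
  assumes "a > 0"
    and "A \<in> hdisk" and "B \<in> hdisk" and "C \<in> hdisk"
    and "kdist A B = a"
  shows "harea (htriangle A B C) \<le> min a pi"
proof -
  define W \<delta> where "W = B - A" and "\<delta> = wedge (A - C) W"
  define I where "I s = integral {0..1} (\<lambda>r. r * klein_density (C + r *\<^sub>R (A + s *\<^sub>R W - C)))" for s
  have area: "harea (htriangle A B C) \<le> integral {0..1} (\<lambda>s. \<bar>\<delta>\<bar> * I s)"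
    using harea_htriangle_le[OF assms(2-4)] by (simp add: \<delta>_def W_def I_def)
  show ?thesis
  proof (cases "\<delta> = 0")
    case True
    with area have "harea (htriangle A B C) \<le> 0" by simp
    then show ?thesis unfolding min.bounded_iff using assms(1) pi_gt_zero by linarith
  next
    case False
    have in_disk: "C + r *\<^sub>R (A + s *\<^sub>R W - C) \<in> hdisk" if "r \<in> {0..1}" "s \<in> {0..1}" for r s
      using ray_in_hdisk[OF assms(2-4) that] by (simp add: W_def)
    have "I s = ray_integral C (A + s *\<^sub>R W - C)" if "s \<in> {0..1}" for s
      unfolding I_def using in_disk[OF _ that] False
      by (intro integral_unique has_integral_ray) (auto simp: hdisk_def \<delta>_def wedge_def)
    then have "integral {0..1} (\<lambda>s. \<bar>\<delta>\<bar> * I s)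
        = integral {0..1} (\<lambda>s. \<bar>\<delta>\<bar> * ray_integral C (A + s *\<^sub>R W - C))"
      by (intro integral_cong) auto
    also have "\<dots> \<le> min (kdist A (A + W)) pi"
      using integral_ray_integral_le_kdist_pi[of A W C] in_disk[of 1] in_disk[of 0 0] False
      by (simp add: hdisk_def \<delta>_def)
    finally show ?thesis
      using area assms(5) by (simp add: W_def)
  qed
qed

end
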